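(* Let $t\in\mathbb N$ and $N=\lvert t\rvert_{\mathtt{01}}$. Then $\frac34N\le v_t\le 5N$.
   Context: For $n\in\mathbb N=\{0,1,\dots\}$, $\lvert n\rvert_{\mathtt{01}}$ denotes the number of maximal blocks of $\mathtt 1$s in the binary expansion of $n$ (equivalently, the number of occurrences of $\mathtt{01}$ in the binary expansion padded with a leading $\mathtt 0$). Define $(v_t)_{t\in\mathbb N}$ by $v_0=0$, $v_1=3/2$, and for all $t\in\mathbb N$: $v_{4t}=v_{2t}$, $v_{4t+2}=v_{2t+1}+1$, $v_{2t+1}=\frac{v_t+v_{t+1}}2+\frac34$. *)

theory Defs
  imports Complex_Main
begin

text \<open>Number of maximal blocks of 1s in the binary expansion of n: counts the
positions i where bit i is 1 and bit i+1 is 0 (the top end of each block),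
i.e. occurrences of 01 in the expansion padded with a leading 0.\<close>
fun blocks01 :: "nat \<Rightarrow> nat" where
  "blocks01 n = (if n = 0 then 0
     else blocks01 (n div 2) + (if odd n \<and> even (n div 2) then 1 else 0))"

declare blocks01.simps [simp del]

function v :: "nat \<Rightarrow> real" where
  "v n = (if n = 0 then 0
          else if n = 1 then 3/2
          else if n mod 4 = 0 then v (n div 2)
          else if n mod 4 = 2 then v (n div 2) + 1
          else (v (n div 2) + v (n div 2 + 1)) / 2 + 3/4)"
  by auto
termination
  by (relation "measure id") (auto, presburger)

end

theory Submission
  imports Defs
begin

text \<open>Prove each bound as an invariant of the pair (v t, v (t+1)) measured
against blocks01 t alone.  The recurrences express v (2t), v (2t+1), v (2t+2)
through v t and v (t+1), and blocks01 (2t), blocks01 (2t+1) through blocks01 t,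
so the invariant passes from t to 2t and 2t+1 without ever comparing blocks01 t
with blocks01 (t+1); the parity of t decides how much slack the second
component needs.\<close>

declare v.simps [simp del]

lemma v_0 [simp]: "v 0 = 0"
  by (simp add: v.simps)

lemma v_Suc_0 [simp]: "v (Suc 0) = 3/2"
  by (simp add: v.simps)

lemma v_double: "v (2 * m) = v m + of_bool (odd m)"
proof (cases "m = 0")
  case False
  have "2 * m \<noteq> 1" and "(2 * m) mod 4 = 2 * (m mod 2)"
    by presburger+
  with False show ?thesis
    by (subst v.simps) (auto elim: oddE)
qed simp

lemma v_Suc_double: "v (Suc (2 * m)) = (v m + v (Suc m)) / 2 + 3/4"
proof (cases "m = 0")
  case False
  have "Suc (2 * m) mod 4 \<noteq> 0" and "Suc (2 * m) mod 4 \<noteq> 2"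
    by presburger+
  with False show ?thesis
    by (subst v.simps) simp
qed simp

lemma v_Suc_Suc_double: "v (Suc (Suc (2 * m))) = v (Suc m) + of_bool (even m)"
  using v_double [of "Suc m"] by simp

lemma blocks01_0 [simp]: "blocks01 0 = 0"
  by (simp add: blocks01.simps)

lemma blocks01_double: "blocks01 (2 * m) = blocks01 m"
  by (cases "m = 0") (simp_all add: blocks01.simps [of "2 * m"])

lemma blocks01_Suc_double: "blocks01 (Suc (2 * m)) = blocks01 m + of_bool (even m)"
  by (simp add: blocks01.simps [of "Suc (2 * m)"])

text \<open>The slack 3/2 for even t is already attained at t = 0, where v 1 = 3/2.\<close>

lemma v_upper_pair:
  "v t \<le> 5 * real (blocks01 t) - of_bool (odd t) \<and>
   v (Suc t) \<le> 5 * real (blocks01 t) + (if odd t then - 5/2 else 3/2)"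
proof (induction t rule: nat_bit_induct)
  case zero
  show ?case by simp
next
  case (even t)
  show ?case
    unfolding v_double v_Suc_double blocks01_double
    using even.IH by (cases "odd t") (auto simp: field_simps)
next
  case (odd t)
  show ?case
    unfolding v_Suc_Suc_double v_Suc_double blocks01_Suc_double
    using odd.IH by (cases "odd t") (auto simp: field_simps)
qed

lemma v_lower_pair:
  "3/4 * real (blocks01 t) \<le> v t \<and>
   3/4 * real (blocks01 t) - 3/4 * of_bool (odd t) \<le> v (Suc t)"
proof (induction t rule: nat_bit_induct)
  case zero
  show ?case by simp
next
  case (even t)
  show ?case
    unfolding v_double v_Suc_double blocks01_double
    using even.IH by (cases "odd t") (auto simp: field_simps)
next
  case (odd t)
  show ?case
    unfolding v_Suc_Suc_double v_Suc_double blocks01_Suc_double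
    using odd.IH by (cases "odd t") (auto simp: field_simps)
qed

theorem proposition3p11:
  fixes t :: nat
  shows "3/4 * real (blocks01 t) \<le> v t \<and> v t \<le> 5 * real (blocks01 t)"
  using v_lower_pair [of t] v_upper_pair [of t] by (cases "odd t") auto

end
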